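(* Let $F$ be a field with $\mathrm{char}\,F\neq 2$, and let $A$ be a flexible quadratic $F$-algebra. If for every $3$-dimensional subalgebra $B$ of $A$ the restriction of the norm $n$ of $A$ to $B$ is non-degenerate, then $A$ is von-Neumann finite and reversible.
   Context: Algebras are vector spaces with bilinear, not necessarily associative, multiplication, and are unital. $A$ is flexible if $a(ba)=(ab)a$ for all $a,b$; quadratic if $1,a,a^2$ are linearly dependent for all $a$. For a quadratic algebra with $\mathrm{char}\,F\ne2$, set $\mathrm{Im}\,A=\{u\in A\setminus F1: u^2\in F1\}\cup\{0\}$; then $A=F1\oplus\mathrm{Im}\,A$, and writing $a=\alpha+u$ with $\alpha\in F,u\in\mathrm{Im}\,A$, the norm is $n(a)=\alpha^2-(u,u)$, where $(u,v)\in F$ is the $F1$-component of $uv$ for $u,v\in \mathrm{Im}\,A$ (equivalently $n(a)=a\bar a$ with $\bar a=\alpha-u$). For a quadratic form $q$ on a space $V$ with $\langle x,y\rangle=q(x+y)-q(x)-q(y)$ and $V^\perp=\{x:\langle x,V\rangle=0\}$, $q$ is non-degenerate if $V^\perp=0$ or ($\dim V^\perp=1$ and $q(V^\perp)\neq0$). von-Neumann finite: $ab=1\Rightarrow ba=1$; reversible: $ab=0\Rightarrow ba=0$. *)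

theory Defs
  imports Complex_Main
begin

definition unital_algebra ::
  "('f::field \<Rightarrow> 'v::ab_group_add \<Rightarrow> 'v) \<Rightarrow> ('v \<Rightarrow> 'v \<Rightarrow> 'v) \<Rightarrow> 'v \<Rightarrow> bool" where
  "unital_algebra sc m e \<longleftrightarrow>
     vector_space sc \<and>
     (\<forall>x y z. m (x + y) z = m x z + m y z \<and> m x (y + z) = m x y + m x z) \<and>
     (\<forall>c x y. m (sc c x) y = sc c (m x y) \<and> m x (sc c y) = sc c (m x y)) \<and>
     (\<forall>x. m e x = x \<and> m x e = x)"

definition flexible_alg :: "('v \<Rightarrow> 'v \<Rightarrow> 'v) \<Rightarrow> bool" where
  "flexible_alg m \<longleftrightarrow> (\<forall>a b. m a (m b a) = m (m a b) a)"

definition quadratic_alg ::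
  "('f::field \<Rightarrow> 'v::ab_group_add \<Rightarrow> 'v) \<Rightarrow> ('v \<Rightarrow> 'v \<Rightarrow> 'v) \<Rightarrow> 'v \<Rightarrow> bool" where
  "quadratic_alg sc m e \<longleftrightarrow>
     (\<forall>a. \<exists>\<alpha> \<beta> \<gamma>. (\<alpha>, \<beta>, \<gamma>) \<noteq> (0, 0, 0) \<and> sc \<alpha> e + sc \<beta> a + sc \<gamma> (m a a) = 0)"

definition scalars :: "('f \<Rightarrow> 'v \<Rightarrow> 'v) \<Rightarrow> 'v \<Rightarrow> 'v set" where
  "scalars sc e = range (\<lambda>c. sc c e)"

definition im_part ::
  "('f::field \<Rightarrow> 'v::ab_group_add \<Rightarrow> 'v) \<Rightarrow> ('v \<Rightarrow> 'v \<Rightarrow> 'v) \<Rightarrow> 'v \<Rightarrow> 'v set" where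
  "im_part sc m e = {u. u \<notin> scalars sc e \<and> m u u \<in> scalars sc e} \<union> {0}"

text \<open>Norm: for a = alpha + u with u in Im A, n(a) = alpha^2 - (u,u), where u u = (u,u) 1.\<close>
definition alg_norm ::
  "('f::field \<Rightarrow> 'v::ab_group_add \<Rightarrow> 'v) \<Rightarrow> ('v \<Rightarrow> 'v \<Rightarrow> 'v) \<Rightarrow> 'v \<Rightarrow> 'v \<Rightarrow> 'f" where
  "alg_norm sc m e a =
     (THE x. \<exists>\<alpha> u. u \<in> im_part sc m e \<and> a = sc \<alpha> e + u \<and> m u u = sc (\<alpha>\<^sup>2 - x) e)"

definition subalgebra ::
  "('f::field \<Rightarrow> 'v::ab_group_add \<Rightarrow> 'v) \<Rightarrow> ('v \<Rightarrow> 'v \<Rightarrow> 'v) \<Rightarrow> 'v \<Rightarrow> 'v set \<Rightarrow> bool" where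
  "subalgebra sc m e B \<longleftrightarrow> module.subspace sc B \<and> e \<in> B \<and> (\<forall>x\<in>B. \<forall>y\<in>B. m x y \<in> B)"

definition polar :: "('v::ab_group_add \<Rightarrow> 'f::field) \<Rightarrow> 'v \<Rightarrow> 'v \<Rightarrow> 'f" where
  "polar q x y = q (x + y) - q x - q y"

definition radical :: "('v::ab_group_add \<Rightarrow> 'f::field) \<Rightarrow> 'v set \<Rightarrow> 'v set" where
  "radical q V = {x \<in> V. \<forall>y\<in>V. polar q x y = 0}"

definition nondegenerate_on ::
  "('f::field \<Rightarrow> 'v::ab_group_add \<Rightarrow> 'v) \<Rightarrow> ('v \<Rightarrow> 'f) \<Rightarrow> 'v set \<Rightarrow> bool" where
  "nondegenerate_on sc q V \<longleftrightarrow>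
     radical q V = {0} \<or>
     (vector_space.dim sc (radical q V) = 1 \<and> (\<exists>x\<in>radical q V. q x \<noteq> 0))"

definition von_neumann_finite :: "('v \<Rightarrow> 'v \<Rightarrow> 'v) \<Rightarrow> 'v \<Rightarrow> bool" where
  "von_neumann_finite m e \<longleftrightarrow> (\<forall>a b. m a b = e \<longrightarrow> m b a = e)"

definition reversible :: "('v::zero \<Rightarrow> 'v \<Rightarrow> 'v) \<Rightarrow> bool" where
  "reversible m \<longleftrightarrow> (\<forall>a b. m a b = 0 \<longrightarrow> m b a = 0)"

end

theory Submission
  imports Defs
begin

text \<open>
  Let \<open>ab = c\<close> with \<open>c\<close> scalar. If \<open>1, a, b\<close> are dependent, \<open>a, b\<close> commute trivially;
  otherwise completing squares gives \<open>a = \<alpha> + u\<close>, \<open>b = \<beta> + v\<close> with \<open>u\<^sup>2, v\<^sup>2 \<in> F1\<close>, and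
  quadraticity of \<open>u \<plusminus> v\<close> makes \<open>uv + vu\<close> scalar, so
  \<open>B = span {1, u, v}\<close> is a 3-dimensional subalgebra with an explicit multiplication table.
  Flexibility yields linear relations showing that \<open>\<beta>u + \<alpha>v\<close> lies in the radical of \<open>n|\<^sub>B\<close>,
  on which \<open>n\<close> vanishes since \<open>char F \<noteq> 2\<close>. Non-degeneracy therefore forces \<open>\<alpha> = \<beta> = 0\<close>,
  and then \<open>ba = vu = c\<close>. The cases \<open>c = 1\<close> and \<open>c = 0\<close> are the two claims.
\<close>

locale nonassoc_algebra = vector_space sc for sc :: "'f::field \<Rightarrow> 'v::ab_group_add \<Rightarrow> 'v" +
  fixes m :: "'v \<Rightarrow> 'v \<Rightarrow> 'v" and e :: 'v
  assumes m_add_left: "m (x + y) z = m x z + m y z"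
    and m_add_right: "m x (y + z) = m x y + m x z"
    and m_scale_left: "m (sc c x) y = sc c (m x y)"
    and m_scale_right: "m x (sc c y) = sc c (m x y)"
    and m_unit_left: "m e x = x"
    and m_unit_right: "m x e = x"
begin

lemmas m_simps = m_add_left m_add_right m_scale_left m_scale_right m_unit_left m_unit_right

lemma m_zero_right [simp]: "m y 0 = 0"
  using m_scale_right[of y 0 0] by simp

lemma m_diff_left: "m (x - z) y = m x y - m z y"
  by (metis add_diff_cancel_right' diff_add_cancel m_add_left)

lemma m_diff_right: "m y (x - z) = m y x - m y z"
  by (metis add_diff_cancel_right' diff_add_cancel m_add_right)

lemma m_commute_unit_span: "m a (sc k e + sc l a) = m (sc k e + sc l a) a"
  by (simp add: m_simps)

lemma scale_solve: "c \<noteq> 0 \<Longrightarrow> sc c x = y \<Longrightarrow> x = sc (inverse c) y"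
  by (metis scale_one scale_scale left_inverse)

lemma unit_zero_imp_trivial: "e = 0 \<Longrightarrow> (x::'v) = 0"
  using m_unit_right[of x] by simp

lemma quadratic_square:
  assumes quad: "quadratic_alg sc m e" and x: "x \<notin> scalars sc e"
  obtains \<kappa> \<mu> where "m x x = sc \<kappa> e + sc \<mu> x"
proof -
  obtain \<alpha> \<beta> \<gamma> where nz: "(\<alpha>, \<beta>, \<gamma>) \<noteq> (0, 0, 0)" and rel: "sc \<alpha> e + sc \<beta> x + sc \<gamma> (m x x) = 0"
    using quad unfolding quadratic_alg_def by blast
  have "x \<noteq> sc k e" for k
    using x unfolding scalars_def by blast
  have "\<gamma> \<noteq> 0"
  proof
    assume "\<gamma> = 0"
    then have lin: "sc \<beta> x = sc (- \<alpha>) e"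
      using rel by (simp add: eq_neg_iff_add_eq_0 add.commute)
    have "\<beta> \<noteq> 0"
    proof
      assume "\<beta> = 0"
      then have "e = 0" using rel nz \<open>\<gamma> = 0\<close> by simp
      then show False using \<open>x \<noteq> sc 0 e\<close> unit_zero_imp_trivial by simp
    qed
    then have "x = sc (inverse \<beta> * - \<alpha>) e"
      using scale_solve[OF _ lin] by (simp add: scale_scale)
    then show False using \<open>\<And>k. x \<noteq> sc k e\<close> by blast
  qed
  have "sc \<gamma> (m x x) = - (sc \<alpha> e + sc \<beta> x)"
    using rel by (metis add_eq_0_iff add.commute)
  then have "m x x = sc (inverse \<gamma>) (- (sc \<alpha> e + sc \<beta> x))"
    using scale_solve[OF \<open>\<gamma> \<noteq> 0\<close>] by blast
  then have "m x x = sc (- \<alpha> / \<gamma>) e + sc (- \<beta> / \<gamma>) x"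
    by (simp add: scale_right_diff_distrib scale_scale divide_inverse_commute)
  then show thesis by (rule that)
qed

lemma square_shift:
  assumes two: "(2::'f) \<noteq> 0" and sq: "m a a = sc \<kappa> e + sc \<mu> a"
  shows "m (a - sc (\<mu>/2) e) (a - sc (\<mu>/2) e) = sc (\<kappa> + (\<mu>/2)\<^sup>2) e"
proof -
  have "\<mu> = \<mu>/2 + \<mu>/2"
    using two by (simp add: field_simps)
  then have \<mu>: "sc \<mu> a = sc (\<mu>/2) a + sc (\<mu>/2) a"
    by (metis scale_left_distrib)
  have "m (a - sc (\<mu>/2) e) (a - sc (\<mu>/2) e)
      = m a a - sc (\<mu>/2) a - sc (\<mu>/2) a + sc ((\<mu>/2)\<^sup>2) e"
    by (simp add: m_diff_left m_diff_right m_simps scale_scale power2_eq_square algebra_simps)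
  also have "\<dots> = sc (\<kappa> + (\<mu>/2)\<^sup>2) e"
    unfolding sq \<mu> by (simp add: algebra_simps)
  finally show ?thesis .
qed

end

locale algebra_frame = nonassoc_algebra sc m e
  for sc :: "'f::field \<Rightarrow> 'v::ab_group_add \<Rightarrow> 'v" and m e +
  fixes u v :: 'v
  assumes frame_independent: "sc g e + sc x u + sc y v = 0 \<Longrightarrow> g = 0 \<and> x = 0 \<and> y = 0"
begin

definition lc :: "'f \<Rightarrow> 'f \<Rightarrow> 'f \<Rightarrow> 'v" where
  "lc g x y = sc g e + sc x u + sc y v"

lemma lc_add: "lc g x y + lc g' x' y' = lc (g + g') (x + x') (y + y')"
  by (simp add: lc_def scale_left_distrib algebra_simps)

lemma lc_diff: "lc g x y - lc g' x' y' = lc (g - g') (x - x') (y - y')"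
  by (simp add: lc_def scale_left_diff_distrib algebra_simps)

lemma lc_scale: "sc k (lc g x y) = lc (k * g) (k * x) (k * y)"
  by (simp add: lc_def scale_right_distrib)

lemma lc_unit: "lc g 0 0 = sc g e"
  and lc_u: "lc 0 1 0 = u"
  and lc_v: "lc 0 0 1 = v"
  and lc_zero: "lc 0 0 0 = 0"
  by (simp_all add: lc_def)

lemma lc_eq_iff: "lc g x y = lc g' x' y' \<longleftrightarrow> g = g' \<and> x = x' \<and> y = y'"
proof
  assume "lc g x y = lc g' x' y'"
  then have "lc (g - g') (x - x') (y - y') = 0"
    using lc_diff[of g x y g' x' y'] by simp
  then show "g = g' \<and> x = x' \<and> y = y'"
    using frame_independent[of "g - g'" "x - x'" "y - y'"] unfolding lc_def by simp
qed simp

lemma unit_nonzero: "e \<noteq> 0"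
  using frame_independent[of 1 0 0] by auto

lemma scalars_lc: "scalars sc e = range (\<lambda>k. lc k 0 0)"
  by (simp add: scalars_def lc_unit)

lemma m_lc_left: "m (lc g x y) z = sc g z + sc x (m u z) + sc y (m v z)"
  by (simp add: lc_def m_simps)

lemma m_lc_right: "m z (lc g x y) = sc g z + sc x (m z u) + sc y (m z v)"
  by (simp add: lc_def m_simps)

lemma m_lc:
  assumes uu: "m u u = lc a\<^sub>1 a\<^sub>2 a\<^sub>3" and uv: "m u v = lc b\<^sub>1 b\<^sub>2 b\<^sub>3"
    and vu: "m v u = lc c\<^sub>1 c\<^sub>2 c\<^sub>3" and vv: "m v v = lc d\<^sub>1 d\<^sub>2 d\<^sub>3"
  shows "m (lc g x y) (lc g' x' y') =
    lc (g*g' + x*x'*a\<^sub>1 + x*y'*b\<^sub>1 + y*x'*c\<^sub>1 + y*y'*d\<^sub>1)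
       (g*x' + x*g' + x*x'*a\<^sub>2 + x*y'*b\<^sub>2 + y*x'*c\<^sub>2 + y*y'*d\<^sub>2)
       (g*y' + y*g' + x*x'*a\<^sub>3 + x*y'*b\<^sub>3 + y*x'*c\<^sub>3 + y*y'*d\<^sub>3)"
proof -
  have mu: "m u (lc g' x' y') = lc (x'*a\<^sub>1 + y'*b\<^sub>1) (g' + x'*a\<^sub>2 + y'*b\<^sub>2) (x'*a\<^sub>3 + y'*b\<^sub>3)"
    unfolding m_lc_right uu uv using lc_u
    by (metis (no_types, lifting) lc_add lc_scale add_0 mult_1_right mult_zero_right)
  have mv: "m v (lc g' x' y') = lc (x'*c\<^sub>1 + y'*d\<^sub>1) (x'*c\<^sub>2 + y'*d\<^sub>2) (g' + x'*c\<^sub>3 + y'*d\<^sub>3)"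
    unfolding m_lc_right vu vv using lc_v
    by (metis (no_types, lifting) lc_add lc_scale add_0 mult_1_right mult_zero_right add.commute)
  show ?thesis
    unfolding m_lc_left mu mv lc_scale lc_add by (simp add: lc_eq_iff algebra_simps)
qed

lemma lc_in_span: "lc g x y \<in> span {e, u, v}"
  unfolding lc_def by (intro span_add span_scale span_base) auto

lemma span_frame_obtain_lc:
  assumes "z \<in> span {e, u, v}"
  obtains g x y where "z = lc g x y"
proof -
  obtain k where "z - sc k e \<in> span {u, v}"
    using assms by (auto simp: span_breakdown_eq)
  then obtain l where "z - sc k e - sc l u \<in> span {v}"
    by (auto simp: span_breakdown_eq)
  then obtain r where "z - sc k e - sc l u = sc r v"
    by (auto simp: span_singleton)
  then have "z = lc k l r"
    unfolding lc_def by (simp add: algebra_simps)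
  then show thesis by (rule that)
qed

lemma dim_span_frame: "dim (span {e, u, v}) = 3"
proof -
  have "v \<noteq> 0"
    using lc_eq_iff[of 0 0 1 0 0 0] by (simp add: lc_v lc_zero)
  moreover have "u \<notin> span {v}"
  proof
    assume "u \<in> span {v}"
    then obtain r where "lc 0 1 0 = lc 0 0 r"
      by (auto simp: span_singleton lc_def)
    then show False by (simp add: lc_eq_iff)
  qed
  moreover have "e \<notin> span {u, v}"
  proof
    assume "e \<in> span {u, v}"
    then obtain k r where "e - sc k u = sc r v"
      by (auto simp: span_breakdown_eq span_singleton)
    then have "lc 1 0 0 = lc 0 k r"
      unfolding lc_def by (simp add: diff_eq_eq)
    then show False by (simp add: lc_eq_iff)
  qed
  ultimately have "independent {e, u, v}"
    by (simp add: independent_insertI)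
  moreover have "card {e, u, v} = 3"
    using lc_eq_iff[of 1 0 0 0 1 0] lc_eq_iff[of 1 0 0 0 0 1] lc_eq_iff[of 0 1 0 0 0 1]
    by (simp add: lc_unit lc_u lc_v)
  ultimately show ?thesis
    by (metis dim_span_eq_card_independent)
qed

lemma span_frame_subalgebra:
  assumes "m u u \<in> span {e, u, v}" "m u v \<in> span {e, u, v}"
    and "m v u \<in> span {e, u, v}" "m v v \<in> span {e, u, v}"
  shows "subalgebra sc m e (span {e, u, v})"
proof -
  have "u \<in> span {e, u, v}" "v \<in> span {e, u, v}"
    by (simp_all add: span_base)
  have right: "m w z \<in> span {e, u, v}" if "w \<in> {u, v}" "z \<in> span {e, u, v}" for w z
  proof -
    obtain g x y where "z = lc g x y"
      using \<open>z \<in> span {e, u, v}\<close> by (rule span_frame_obtain_lc)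
    then show ?thesis
      using that assms \<open>u \<in> span {e, u, v}\<close> \<open>v \<in> span {e, u, v}\<close>
      by (auto simp: m_lc_right intro!: span_add span_scale)
  qed
  have "m w z \<in> span {e, u, v}" if "w \<in> span {e, u, v}" "z \<in> span {e, u, v}" for w z
  proof -
    obtain g x y where "w = lc g x y"
      using \<open>w \<in> span {e, u, v}\<close> by (rule span_frame_obtain_lc)
    then show ?thesis
      using that right by (auto simp: m_lc_left intro!: span_add span_scale)
  qed
  then show ?thesis
    unfolding subalgebra_def by (simp add: span_base)
qed

lemma anticommutator_scalar:
  assumes two: "(2::'f) \<noteq> 0" and quad: "quadratic_alg sc m e"
    and uu: "m u u = sc p e" and vv: "m v v = sc q e"
  obtains s where "m u v + m v u = sc s e"
proof -
  define W where "W = m u v + m v u"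
  have non_scalar: "lc 0 1 k \<notin> scalars sc e" for k
    unfolding scalars_lc by (auto simp: lc_eq_iff)
  then have "u + v \<notin> scalars sc e" "u - v \<notin> scalars sc e"
    using non_scalar[of 1] non_scalar[of "-1"] by (simp_all add: lc_def)
  then obtain \<kappa>\<^sub>1 \<mu>\<^sub>1 \<kappa>\<^sub>2 \<mu>\<^sub>2
    where sq1: "m (u + v) (u + v) = sc \<kappa>\<^sub>1 e + sc \<mu>\<^sub>1 (u + v)"
      and sq2: "m (u - v) (u - v) = sc \<kappa>\<^sub>2 e + sc \<mu>\<^sub>2 (u - v)"
    using quadratic_square[OF quad] by metis
  have "m (u + v) (u + v) = sc (p + q) e + W"
    by (simp add: m_simps uu vv W_def scale_left_distrib ac_simps)
  then have W1: "W = lc (\<kappa>\<^sub>1 - (p + q)) \<mu>\<^sub>1 \<mu>\<^sub>1"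
    using sq1 by (simp add: lc_def scale_right_distrib scale_left_diff_distrib algebra_simps)
  have "m (u - v) (u - v) = sc (p + q) e - W"
    by (simp add: m_diff_left m_diff_right uu vv W_def scale_left_distrib algebra_simps)
  then have W2: "W = lc (p + q - \<kappa>\<^sub>2) (- \<mu>\<^sub>2) \<mu>\<^sub>2"
    using sq2 by (simp add: lc_def scale_right_diff_distrib scale_left_diff_distrib algebra_simps)
  have "lc (\<kappa>\<^sub>1 - (p + q)) \<mu>\<^sub>1 \<mu>\<^sub>1 = lc (p + q - \<kappa>\<^sub>2) (- \<mu>\<^sub>2) \<mu>\<^sub>2"
    using W1 W2 by simp
  then have "\<mu>\<^sub>1 = - \<mu>\<^sub>2 \<and> \<mu>\<^sub>1 = \<mu>\<^sub>2"
    unfolding lc_eq_iff by blast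
  then have "2 * \<mu>\<^sub>1 = 0"
    by (metis mult_2 add.right_inverse)
  then have "\<mu>\<^sub>1 = 0"
    using two by simp
  then have "W = sc (\<kappa>\<^sub>1 - (p + q)) e"
    using W1 by (simp add: lc_unit)
  then show thesis
    unfolding W_def by (rule that)
qed

text \<open>
  The multiplication table forced by \<open>(\<alpha> + u)(\<beta> + v) = c\<close> with \<open>d = c - \<alpha>\<beta>\<close>,
  \<open>u\<^sup>2 = p\<close>, \<open>v\<^sup>2 = q\<close> and \<open>uv + vu = s\<close>.
\<close>

context
  fixes p q d s \<alpha> \<beta> :: 'f
  assumes two: "(2::'f) \<noteq> 0"
    and uu: "m u u = lc p 0 0" and uv: "m u v = lc d (- \<beta>) (- \<alpha>)"
    and vu: "m v u = lc (s - d) \<beta> \<alpha>" and vv: "m v v = lc q 0 0"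
begin

lemma lc_square:
  "m (lc g x y) (lc g x y) = lc (g\<^sup>2 + x\<^sup>2*p + y\<^sup>2*q + x*y*s) (2*g*x) (2*g*y)"
  unfolding m_lc[OF uu uv vu vv] by (simp add: lc_eq_iff power2_eq_square algebra_simps)

lemma lc_in_im_part: "lc 0 x y \<in> im_part sc m e"
proof (cases "x = 0 \<and> y = 0")
  case True
  then show ?thesis by (simp add: im_part_def lc_zero)
next
  case False
  then show ?thesis
    using lc_square[of 0 x y] unfolding im_part_def scalars_lc by (auto simp: lc_eq_iff)
qed

lemma im_part_lc_decomposition:
  assumes w: "w \<in> im_part sc m e" and decomp: "lc g x y = sc \<gamma> e + w"
  shows "\<gamma> = g \<and> w = lc 0 x y"
proof -
  have w_lc: "w = lc (g - \<gamma>) x y"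
    using decomp lc_diff[of g x y \<gamma> 0 0] by (simp add: lc_unit)
  have "m w w \<in> scalars sc e"
    using w unfolding im_part_def scalars_def by (auto intro: range_eqI[of _ _ 0])
  then have "2 * (g - \<gamma>) * x = 0 \<and> 2 * (g - \<gamma>) * y = 0"
    unfolding w_lc lc_square scalars_lc by (auto simp: lc_eq_iff)
  moreover have "g = \<gamma>" if "x = 0" "y = 0"
  proof -
    have "w \<in> scalars sc e"
      unfolding w_lc scalars_lc using that by simp
    then have "w = 0"
      using w unfolding im_part_def by blast
    then show ?thesis
      using w_lc that lc_eq_iff[of "g - \<gamma>" 0 0 0 0 0] by (simp add: lc_zero)
  qed
  ultimately have "\<gamma> = g"
    using two by force
  then show ?thesis
    using w_lc by simp
qed

lemma alg_norm_lc: "alg_norm sc m e (lc g x y) = g\<^sup>2 - x\<^sup>2*p - y\<^sup>2*q - x*y*s"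
  unfolding alg_norm_def
proof (rule the_equality)
  have "m (lc 0 x y) (lc 0 x y) = sc (g\<^sup>2 - (g\<^sup>2 - x\<^sup>2*p - y\<^sup>2*q - x*y*s)) e"
    using lc_square[of 0 x y] by (simp add: lc_unit[symmetric] add.assoc)
  moreover have "lc g x y = sc g e + lc 0 x y"
    by (simp add: lc_unit[symmetric] lc_add)
  ultimately show "\<exists>\<gamma> w. w \<in> im_part sc m e \<and> lc g x y = sc \<gamma> e + w
      \<and> m w w = sc (\<gamma>\<^sup>2 - (g\<^sup>2 - x\<^sup>2*p - y\<^sup>2*q - x*y*s)) e"
    using lc_in_im_part by blast
next
  fix n
  assume "\<exists>\<gamma> w. w \<in> im_part sc m e \<and> lc g x y = sc \<gamma> e + w \<and> m w w = sc (\<gamma>\<^sup>2 - n) e"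
  then obtain \<gamma> w where "w \<in> im_part sc m e" "lc g x y = sc \<gamma> e + w"
    and ww: "m w w = sc (\<gamma>\<^sup>2 - n) e"
    by blast
  then have "\<gamma> = g" "w = lc 0 x y"
    using im_part_lc_decomposition by blast+
  then have "g\<^sup>2 - n = x\<^sup>2*p + y\<^sup>2*q + x*y*s"
    using ww lc_square[of 0 x y] unit_nonzero by (auto simp: lc_unit)
  then show "n = g\<^sup>2 - x\<^sup>2*p - y\<^sup>2*q - x*y*s"
    by (simp add: algebra_simps)
qed

lemma flexible_frame_relations:
  assumes flex: "flexible_alg m"
  shows "s = 2 * d" and "\<beta> * p + \<alpha> * d = 0" and "\<beta> * d + \<alpha> * q = 0"
proof -
  note table = m_lc[OF uu uv vu vv]
  have "m (lc 0 1 0) (lc (s - d) \<beta> \<alpha>) = m (lc d (- \<beta>) (- \<alpha>)) (lc 0 1 0)"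
    using flex unfolding flexible_alg_def lc_u vu[symmetric] uv[symmetric] by blast
  then have u_rel: "\<beta>*p + \<alpha>*d = - \<beta>*p - \<alpha>*(s - d)" and s_rel: "s - d = d"
    unfolding table lc_eq_iff by algebra+
  have "m (lc 0 0 1) (lc d (- \<beta>) (- \<alpha>)) = m (lc (s - d) \<beta> \<alpha>) (lc 0 0 1)"
    using flex unfolding flexible_alg_def lc_v vu[symmetric] uv[symmetric] by blast
  then have v_rel: "- \<beta>*(s - d) - \<alpha>*q = \<beta>*d + \<alpha>*q"
    unfolding table lc_eq_iff by algebra
  show "s = 2 * d"
    using s_rel by simp
  have "2 * (\<beta>*p + \<alpha>*d) = 0" "2 * (\<beta>*d + \<alpha>*q) = 0"
    using u_rel v_rel s_rel by (simp_all add: algebra_simps)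
  then show "\<beta> * p + \<alpha> * d = 0" "\<beta> * d + \<alpha> * q = 0"
    using two by (simp_all only: mult_eq_0_iff simp_thms)
qed

lemma frame_norm_degenerate:
  assumes "s = 2 * d" and "\<beta> * p + \<alpha> * d = 0" and "\<beta> * d + \<alpha> * q = 0"
    and "(\<alpha>, \<beta>) \<noteq> (0, 0)"
  shows "\<not> nondegenerate_on sc (alg_norm sc m e) (span {e, u, v})"
proof -
  let ?n = "alg_norm sc m e" and ?R = "radical (alg_norm sc m e) (span {e, u, v})"
  have "lc 0 \<beta> \<alpha> \<in> ?R"
    unfolding radical_def
  proof (intro CollectI conjI ballI)
    fix z
    assume "z \<in> span {e, u, v}"
    then obtain g x y where z: "z = lc g x y"
      by (rule span_frame_obtain_lc)
    have "polar ?n (lc 0 \<beta> \<alpha>) z = -2*x*(\<beta>*p + \<alpha>*d) - 2*y*(\<beta>*d + \<alpha>*q)"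
      unfolding z polar_def lc_add alg_norm_lc \<open>s = 2 * d\<close>
      by (simp add: power2_eq_square algebra_simps)
    then show "polar ?n (lc 0 \<beta> \<alpha>) z = 0"
      using assms by simp
  qed (rule lc_in_span)
  moreover have "lc 0 \<beta> \<alpha> \<noteq> 0"
    using assms(4) lc_eq_iff[of 0 \<beta> \<alpha> 0 0 0] by (auto simp: lc_zero)
  moreover have "?n z = 0" if "z \<in> ?R" for z
  proof -
    have "z \<in> span {e, u, v}"
      using that unfolding radical_def by blast
    then obtain g x y where z: "z = lc g x y"
      by (rule span_frame_obtain_lc)
    have "polar ?n z z = 2 * ?n z"
      unfolding z polar_def lc_add alg_norm_lc by (simp add: power2_eq_square algebra_simps)
    then show ?thesis
      using that two unfolding radical_def by simp
  qed
  ultimately show ?thesis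
    unfolding nondegenerate_on_def by auto
qed

end

lemma frame_scalar_product_commute:
  assumes two: "(2::'f) \<noteq> 0" and flex: "flexible_alg m" and quad: "quadratic_alg sc m e"
    and nd: "\<forall>B. subalgebra sc m e B \<and> dim B = 3 \<longrightarrow> nondegenerate_on sc (alg_norm sc m e) B"
    and uu: "m u u = sc p e" and vv: "m v v = sc q e"
    and prod: "m (sc \<alpha> e + u) (sc \<beta> e + v) = sc c e"
  shows "m (sc \<beta> e + v) (sc \<alpha> e + u) = sc c e"
proof -
  define d where "d = c - \<alpha> * \<beta>"
  have uu': "m u u = lc p 0 0" and vv': "m v v = lc q 0 0"
    using uu vv by (simp_all add: lc_unit)
  have "m (sc \<alpha> e + u) (sc \<beta> e + v) = lc (\<alpha> * \<beta>) \<beta> \<alpha> + m u v"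
    by (simp add: m_simps lc_def scale_scale scale_right_distrib ac_simps)
  then have uv: "m u v = lc d (- \<beta>) (- \<alpha>)"
    using prod lc_diff[of c 0 0 "\<alpha> * \<beta>" \<beta> \<alpha>] by (simp add: d_def lc_unit eq_diff_eq')
  obtain s where "m u v + m v u = sc s e"
    using anticommutator_scalar[OF two quad uu vv] .
  then have "m v u = sc s e - m u v"
    by (metis add_diff_cancel_left')
  then have vu: "m v u = lc (s - d) \<beta> \<alpha>"
    using uv lc_diff[of s 0 0 d "- \<beta>" "- \<alpha>"] by (simp add: lc_unit)
  note table = two uu' uv vu vv'
  have "subalgebra sc m e (span {e, u, v})"
    by (rule span_frame_subalgebra) (simp_all only: uu' uv vu vv' lc_in_span)
  then have "nondegenerate_on sc (alg_norm sc m e) (span {e, u, v})"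
    using nd dim_span_frame by blast
  then have "\<alpha> = 0" "\<beta> = 0"
    using frame_norm_degenerate[OF table flexible_frame_relations[OF table flex]] by auto
  moreover have "s = 2 * d"
    using flexible_frame_relations[OF table flex] by simp
  ultimately show ?thesis
    using vu by (simp add: d_def lc_unit)
qed

end

context nonassoc_algebra
begin

lemma dependent_triple_commute:
  assumes rel: "sc g e + sc x a + sc y b = 0" and nontrivial: "(g, x, y) \<noteq> (0, 0, 0)"
  shows "m a b = m b a"
proof -
  consider "y \<noteq> 0" | "y = 0" "x \<noteq> 0" | "y = 0" "x = 0" "g \<noteq> 0"
    using nontrivial by auto
  then show ?thesis
  proof cases
    case 1
    have "sc y b = - (sc g e + sc x a)"
      using rel by (metis add_eq_0_iff add.commute)
    then have "b = sc (inverse y) (- (sc g e + sc x a))"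
      by (rule scale_solve[OF 1])
    then have "b = sc (- g / y) e + sc (- x / y) a"
      by (simp add: scale_right_diff_distrib scale_scale divide_inverse_commute)
    then show ?thesis
      by (simp only: m_commute_unit_span)
  next
    case 2
    then have "sc x a = - sc g e"
      using rel by (metis add_eq_0_iff add.commute add_0_right scale_zero_left)
    then have "a = sc (inverse x) (- sc g e)"
      by (rule scale_solve[OF \<open>x \<noteq> 0\<close>])
    then have "a = sc (- g / x) e"
      by (simp add: scale_scale divide_inverse_commute)
    then show ?thesis
      by (simp only: m_scale_left m_scale_right m_unit_left m_unit_right)
  next
    case 3
    then have "e = 0"
      using rel by simp
    then show ?thesis
      using unit_zero_imp_trivial by metis
  qed
qed

lemma algebra_frame_shift:
  assumes indep: "\<forall>g x y. sc g e + sc x a + sc y b = 0 \<longrightarrow> g = 0 \<and> x = 0 \<and> y = 0"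
  shows "algebra_frame sc m e (a - sc \<alpha> e) (b - sc \<beta> e)"
proof (intro algebra_frame.intro algebra_frame_axioms.intro)
  show "nonassoc_algebra sc m e"
    by unfold_locales
  fix g x y
  assume "sc g e + sc x (a - sc \<alpha> e) + sc y (b - sc \<beta> e) = 0"
  then have "sc (g - x * \<alpha> - y * \<beta>) e + sc x a + sc y b = 0"
    by (simp add: scale_right_diff_distrib scale_left_diff_distrib scale_scale algebra_simps)
  then have "g - x * \<alpha> - y * \<beta> = 0 \<and> x = 0 \<and> y = 0"
    using indep by blast
  then show "g = 0 \<and> x = 0 \<and> y = 0"
    by force
qed

lemma scalar_product_commute:
  assumes two: "(2::'f) \<noteq> 0" and flex: "flexible_alg m" and quad: "quadratic_alg sc m e"
    and nd: "\<forall>B. subalgebra sc m e B \<and> dim B = 3 \<longrightarrow> nondegenerate_on sc (alg_norm sc m e) B"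
    and ab: "m a b = sc c e"
  shows "m b a = sc c e"
proof (cases "\<forall>g x y. sc g e + sc x a + sc y b = 0 \<longrightarrow> g = 0 \<and> x = 0 \<and> y = 0")
  case False
  then obtain g x y where "sc g e + sc x a + sc y b = 0" "(g, x, y) \<noteq> (0, 0, 0)"
    by auto
  then show ?thesis
    using ab dependent_triple_commute by metis
next
  case indep: True
  have "a \<notin> scalars sc e"
  proof
    assume "a \<in> scalars sc e"
    then obtain k where "sc (- k) e + sc 1 a + sc 0 b = 0"
      by (auto simp: scalars_def)
    then have "(1::'f) = 0"
      using indep by blast
    then show False
      by simp
  qed
  then obtain \<kappa>\<^sub>a \<mu>\<^sub>a where "m a a = sc \<kappa>\<^sub>a e + sc \<mu>\<^sub>a a"
    using quadratic_square[OF quad] by blast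
  then have uu: "m (a - sc (\<mu>\<^sub>a/2) e) (a - sc (\<mu>\<^sub>a/2) e) = sc (\<kappa>\<^sub>a + (\<mu>\<^sub>a/2)\<^sup>2) e"
    by (rule square_shift[OF two])
  have "b \<notin> scalars sc e"
  proof
    assume "b \<in> scalars sc e"
    then obtain k where "sc (- k) e + sc 0 a + sc 1 b = 0"
      by (auto simp: scalars_def)
    then have "(1::'f) = 0"
      using indep by blast
    then show False
      by simp
  qed
  then obtain \<kappa>\<^sub>b \<mu>\<^sub>b where "m b b = sc \<kappa>\<^sub>b e + sc \<mu>\<^sub>b b"
    using quadratic_square[OF quad] by blast
  then have vv: "m (b - sc (\<mu>\<^sub>b/2) e) (b - sc (\<mu>\<^sub>b/2) e) = sc (\<kappa>\<^sub>b + (\<mu>\<^sub>b/2)\<^sup>2) e"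
    by (rule square_shift[OF two])
  interpret algebra_frame sc m e "a - sc (\<mu>\<^sub>a/2) e" "b - sc (\<mu>\<^sub>b/2) e"
    using indep by (rule algebra_frame_shift)
  have "m (sc (\<mu>\<^sub>a/2) e + (a - sc (\<mu>\<^sub>a/2) e)) (sc (\<mu>\<^sub>b/2) e + (b - sc (\<mu>\<^sub>b/2) e)) = sc c e"
    using ab by simp
  from frame_scalar_product_commute[OF two flex quad nd uu vv this] show ?thesis
    by simp
qed

end

theorem proposition4p4:
  fixes sc :: "'f::field \<Rightarrow> 'v::ab_group_add \<Rightarrow> 'v"
    and m :: "'v \<Rightarrow> 'v \<Rightarrow> 'v" and e :: 'v
  assumes "(2::'f) \<noteq> 0"
    and "unital_algebra sc m e"
    and "flexible_alg m"
    and "quadratic_alg sc m e"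
    and "\<forall>B. subalgebra sc m e B \<and> vector_space.dim sc B = 3
           \<longrightarrow> nondegenerate_on sc (alg_norm sc m e) B"
  shows "von_neumann_finite m e \<and> reversible m"
proof -
  interpret nonassoc_algebra sc m e
    using assms(2) unfolding unital_algebra_def nonassoc_algebra_def nonassoc_algebra_axioms_def
    by blast
  have commute: "m b a = sc c e" if "m a b = sc c e" for a b c
    using scalar_product_commute[OF assms(1,3,4,5) that] .
  have "m b a = e" if "m a b = e" for a b
    using commute[of a b 1] that by simp
  moreover have "m b a = 0" if "m a b = 0" for a b
    using commute[of a b 0] that by simp
  ultimately show ?thesis
    unfolding von_neumann_finite_def reversible_def by blast
qed

end
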